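(* Let $\{x_k\}$ be generated by the Subgradient-InexP method with the exogenous stepsize rule, under the standing assumptions, and assume $\{x_k\}$ converges to a point $x_*\in\Omega^*$. Then there is $c>0$ with $\|s_k\|\le c$ for all $k$, and with $\Gamma:=\max\{1,c\}$ and $\rho:=\nu+2\mu$, $\nu=\frac{1+2\bar\gamma}{1-2\bar\lambda}$, for every $N\in\mathbb{N}$, $$\min\{f(x_k)-f^*:\ k=0,1,\dots,N\}\le \Gamma\,\frac{\|x_0-x_*\|^2+\rho\sum_{k=0}^N\alpha_k^2}{2\sum_{k=0}^N\alpha_k}.$$
   Context: Problem: minimize a convex $f:\mathbb{R}^n\to\mathbb{R}$ over a nonempty closed convex $C\subset\mathbb{R}^n$; $f^*:=\inf_{x\in C}f(x)$, $\Omega^*$ the set of minimizers. For $\epsilon\ge0$, $\partial_\epsilon f(x):=\{s: f(y)\ge f(x)+\langle s,y-x\rangle-\epsilon\ \forall y\}$. Relative error tolerance function: any $\varphi_{\gamma,\theta,\lambda}:(\mathbb{R}^n)^3\to[0,\infty)$ with $\varphi_{\gamma,\theta,\lambda}(u,v,w)\le\gamma\|v-u\|^2+\theta\|w-v\|^2+\lambda\|w-u\|^2$; for $u\in C$, $\mathcal{P}_C(\varphi_{\gamma,\theta,\lambda},u,v):=\{w\in C:\langle v-w,z-w\rangle\le\varphi_{\gamma,\theta,\lambda}(u,v,w)\ \forall z\in C\}$. Subgradient-InexP method: $x_0\in C$; at iteration $k$, if $0\in\partial f(x_k)$ stop; otherwise choose nonzero $s_k\in\partial_{\epsilon_k}f(x_k)$,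 stepsize $t_k>0$, and $x_{k+1}\in\mathcal{P}_C(\varphi_{\gamma_k,\theta_k,\lambda_k},x_k,x_k-t_ks_k)$. Standing assumptions: $\gamma_k\in[0,\bar\gamma)$, $\theta_k\in[0,\bar\theta)$, $\lambda_k\in[0,\bar\lambda)$ with $\bar\gamma\ge0$, $\bar\theta,\bar\lambda\in[0,1/2)$; the sequence is infinite. Exogenous stepsize rule: $\mu\ge0$; $\{\alpha_k\}$, $\{\epsilon_k\}$ nonnegative, $\{\epsilon_k\}$ nonincreasing, $\sum_k\alpha_k=+\infty$, $\sum_k\alpha_k^2<+\infty$, $\epsilon_k\le\mu\alpha_k$; $t_k:=\alpha_k/\eta_k$, $\eta_k:=\max\{1,\|s_k\|\}$. *)

theory Defs
  imports "HOL-Analysis.Analysis"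
begin

definition eps_subdiff :: "('a::real_inner \<Rightarrow> real) \<Rightarrow> real \<Rightarrow> 'a \<Rightarrow> 'a set" where
  "eps_subdiff f \<epsilon> x = {s. \<forall>y. f y \<ge> f x + inner s (y - x) - \<epsilon>}"

definition subdiff :: "('a::real_inner \<Rightarrow> real) \<Rightarrow> 'a \<Rightarrow> 'a set" where
  "subdiff f x = eps_subdiff f 0 x"

definition opt_val :: "('a \<Rightarrow> real) \<Rightarrow> 'a set \<Rightarrow> real" where
  "opt_val f C = Inf (f ` C)"

definition opt_set :: "('a \<Rightarrow> real) \<Rightarrow> 'a set \<Rightarrow> 'a set" where
  "opt_set f C = {x \<in> C. \<forall>y\<in>C. f x \<le> f y}"

definition rel_err_tol :: "real \<Rightarrow> real \<Rightarrow> real \<Rightarrow> ('a::real_normed_vector \<Rightarrow> 'a \<Rightarrow> 'a \<Rightarrow> real) \<Rightarrow> bool" where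
  "rel_err_tol \<gamma> \<theta> lam \<phi> \<longleftrightarrow>
     (\<forall>u v w. 0 \<le> \<phi> u v w \<and>
        \<phi> u v w \<le> \<gamma> * (norm (v - u))\<^sup>2 + \<theta> * (norm (w - v))\<^sup>2 + lam * (norm (w - u))\<^sup>2)"

definition inexact_proj :: "'a::real_inner set \<Rightarrow> ('a \<Rightarrow> 'a \<Rightarrow> 'a \<Rightarrow> real) \<Rightarrow> 'a \<Rightarrow> 'a \<Rightarrow> 'a set" where
  "inexact_proj C \<phi> u v = {w \<in> C. \<forall>z\<in>C. inner (v - w) (z - w) \<le> \<phi> u v w}"

end

theory Submission
  imports Defs
begin

text \<open>
  An inexact projection onto \<open>C\<close> with relative error \<open>(\<gamma>, \<theta>, \<lambda>)\<close> is nonexpansive up to the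
  additive term \<open>(\<nu> - 1) \<parallel>v - u\<parallel>\<^sup>2\<close>, \<open>\<nu> = (1 + 2\<gamma>)/(1 - 2\<lambda>)\<close>. Combined with the
  \<open>\<epsilon>\<close>-subgradient inequality this gives the quasi-Fejer estimate
  \<open>\<parallel>x\<^sub>k\<^sub>+\<^sub>1 - x\<^sub>*\<parallel>\<^sup>2 \<le> \<parallel>x\<^sub>k - x\<^sub>*\<parallel>\<^sup>2 - 2 t\<^sub>k (f x\<^sub>k - f\<^sup>*) + 2 t\<^sub>k \<epsilon>\<^sub>k + \<nu> t\<^sub>k\<^sup>2 \<parallel>s\<^sub>k\<parallel>\<^sup>2\<close>.
  Since \<open>x\<^sub>k\<close> converges it is bounded, so the convex (hence continuous) \<open>f\<close> is bounded near it
  and the \<open>\<epsilon>\<^sub>k\<close>-subgradients are bounded by some \<open>c\<close>; then \<open>\<alpha>\<^sub>k/\<Gamma> \<le> t\<^sub>k \<le> \<alpha>\<^sub>k\<close> and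
  \<open>t\<^sub>k \<parallel>s\<^sub>k\<parallel> \<le> \<alpha>\<^sub>k\<close>, and summing the estimate over \<open>k \<le> N\<close> bounds the
  \<open>\<alpha>\<close>-weighted average of the gaps, hence their minimum.
\<close>

lemma inexact_proj_three_point:
  fixes u v w z :: "'a::real_inner"
  assumes tol: "rel_err_tol g th l \<phi>" and w: "w \<in> inexact_proj C \<phi> u v" and z: "z \<in> C"
  shows "(norm (w - z))\<^sup>2 + (1 - 2 * th) * (norm (w - v))\<^sup>2
           \<le> (norm (v - z))\<^sup>2 + 2 * g * (norm (v - u))\<^sup>2 + 2 * l * (norm (w - u))\<^sup>2"
proof -
  have "inner (v - w) (z - w) \<le> \<phi> u v w"
    using w z by (auto simp: inexact_proj_def)
  also have "\<dots> \<le> g * (norm (v - u))\<^sup>2 + th * (norm (w - v))\<^sup>2 + l * (norm (w - u))\<^sup>2"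
    using tol by (auto simp: rel_err_tol_def)
  finally have "inner (v - w) (z - w) \<le> \<dots>" .
  moreover have "2 * inner (v - w) (z - w) = (norm (w - v))\<^sup>2 + (norm (w - z))\<^sup>2 - (norm (v - z))\<^sup>2"
    using dot_norm_neg[of "v - w" "z - w"] by (simp add: norm_minus_commute)
  ultimately show ?thesis by (simp add: algebra_simps)
qed

lemma inexact_proj_near_anchor:
  fixes u v w :: "'a::real_inner"
  assumes "rel_err_tol g th l \<phi>" "w \<in> inexact_proj C \<phi> u v" "u \<in> C"
    and "th \<le> 1/2" "l < 1/2"
  shows "(norm (w - u))\<^sup>2 \<le> (1 + 2 * g) / (1 - 2 * l) * (norm (v - u))\<^sup>2"
proof -
  have "(norm (w - u))\<^sup>2 + (1 - 2 * th) * (norm (w - v))\<^sup>2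
          \<le> (norm (v - u))\<^sup>2 + 2 * g * (norm (v - u))\<^sup>2 + 2 * l * (norm (w - u))\<^sup>2"
    using inexact_proj_three_point[OF assms(1-3)] .
  moreover have "0 \<le> (1 - 2 * th) * (norm (w - v))\<^sup>2"
    using \<open>th \<le> 1/2\<close> by simp
  ultimately have "(1 - 2 * l) * (norm (w - u))\<^sup>2 \<le> (1 + 2 * g) * (norm (v - u))\<^sup>2"
    by (simp add: algebra_simps)
  then show ?thesis
    using \<open>l < 1/2\<close> by (simp add: pos_le_divide_eq mult.commute)
qed

lemma inexact_proj_dist_le:
  fixes u v w z :: "'a::real_inner"
  assumes tol: "rel_err_tol g th l \<phi>" and w: "w \<in> inexact_proj C \<phi> u v"
    and u: "u \<in> C" and z: "z \<in> C"
    and g: "0 \<le> g" and l: "0 \<le> l" "l < 1/2" and th: "th \<le> 1/2"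
  shows "(norm (w - z))\<^sup>2 \<le> (norm (v - z))\<^sup>2 + ((1 + 2 * g) / (1 - 2 * l) - 1) * (norm (v - u))\<^sup>2"
proof -
  define \<nu> where "\<nu> = (1 + 2 * g) / (1 - 2 * l)"
  have "0 \<le> (1 - 2 * th) * (norm (w - v))\<^sup>2"
    using th by simp
  then have "(norm (w - z))\<^sup>2 \<le> (norm (v - z))\<^sup>2 + 2 * g * (norm (v - u))\<^sup>2 + 2 * l * (norm (w - u))\<^sup>2"
    using inexact_proj_three_point[OF tol w z] by linarith
  also have "2 * l * (norm (w - u))\<^sup>2 \<le> 2 * l * (\<nu> * (norm (v - u))\<^sup>2)"
    using inexact_proj_near_anchor[OF tol w u th l(2)] l(1)
    unfolding \<nu>_def by (intro mult_left_mono) auto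
  also have "(norm (v - z))\<^sup>2 + 2 * g * (norm (v - u))\<^sup>2 + 2 * l * (\<nu> * (norm (v - u))\<^sup>2)
      = (norm (v - z))\<^sup>2 + (2 * g + 2 * l * \<nu>) * (norm (v - u))\<^sup>2"
    by (simp add: algebra_simps)
  also have "2 * g + 2 * l * \<nu> = \<nu> - 1"
    using l(2) by (simp add: \<nu>_def field_simps)
  finally show ?thesis
    by (simp add: \<nu>_def)
qed
lemma inexact_proj_const_mono:
  fixes g l gb lb :: real
  assumes "0 \<le> g" "g \<le> gb" "0 \<le> l" "l \<le> lb" "lb < 1/2"
  shows "(1 + 2 * g) / (1 - 2 * l) \<le> (1 + 2 * gb) / (1 - 2 * lb)"
  using assms by (intro frac_le) auto

lemma eps_subdiff_norm_le:
  fixes f :: "'a::real_inner \<Rightarrow> real"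
  assumes s: "s \<in> eps_subdiff f \<epsilon> x" and B: "\<forall>y\<in>cball x 1. \<bar>f y\<bar> \<le> B"
  shows "norm s \<le> 2 * B + \<epsilon>"
proof -
  \<comment> \<open>also covers \<open>s = 0\<close>: then \<open>y = x\<close>, as \<open>1 / 0 = 0\<close>\<close>
  define y where "y = x + (1 / norm s) *\<^sub>R s"
  have "inner s (y - x) = norm s"
    by (simp add: y_def power2_norm_eq_inner[symmetric] power2_eq_square)
  moreover have "y \<in> cball x 1"
    by (simp add: y_def dist_norm)
  moreover have "f y \<ge> f x + inner s (y - x) - \<epsilon>"
    using s by (simp add: eps_subdiff_def)
  moreover have "\<bar>f y\<bar> \<le> B" "\<bar>f x\<bar> \<le> B"
    using B \<open>y \<in> cball x 1\<close> by auto
  ultimately show ?thesis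
    by linarith
qed

lemma convex_eps_subgradients_bounded:
  fixes f :: "'a::euclidean_space \<Rightarrow> real"
  assumes "convex_on UNIV f" and "bounded (range x)"
    and s: "\<And>k. s k \<in> eps_subdiff f (\<epsilon> k) (x k)" and E: "\<And>k. \<epsilon> k \<le> E"
  shows "\<exists>c>0. \<forall>k. norm (s k) \<le> c"
proof -
  obtain R where R: "\<And>k. norm (x k) \<le> R"
    using \<open>bounded (range x)\<close> by (auto simp: bounded_iff)
  have "continuous_on UNIV f"
    using \<open>convex_on UNIV f\<close> by (intro convex_on_continuous) auto
  then have "bounded (f ` cball 0 (R + 1))"
    by (intro compact_imp_bounded compact_continuous_image compact_cball)
       (auto intro: continuous_on_subset)
  then obtain B where B: "\<forall>y\<in>cball 0 (R + 1). \<bar>f y\<bar> \<le> B"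
    by (auto simp: bounded_iff)
  have "norm (s k) \<le> 2 * B + E" for k
  proof -
    have "cball (x k) 1 \<subseteq> cball 0 (R + 1)"
      using R[of k] by (simp add: cball_subset_cball_iff dist_norm)
    then have "norm (s k) \<le> 2 * B + \<epsilon> k"
      using B by (intro eps_subdiff_norm_le[OF s]) blast
    then show ?thesis using E[of k] by linarith
  qed
  then show ?thesis
    by (intro exI[of _ "max 1 (2 * B + E)"]) (auto intro: max.coboundedI2)
qed

lemma eps_subgradient_inexact_proj_step:
  fixes x x' z s :: "'a::real_inner"
  assumes s: "s \<in> eps_subdiff f \<epsilon> x"
    and x': "x' \<in> inexact_proj C \<phi> x (x - t *\<^sub>R s)"
    and tol: "rel_err_tol g th l \<phi>" and x: "x \<in> C" and z: "z \<in> C" and t: "0 \<le> t"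
    and g: "0 \<le> g" "g \<le> gb" and l: "0 \<le> l" "l \<le> lb" "lb < 1/2" and th: "th \<le> 1/2"
  shows "(norm (x' - z))\<^sup>2 \<le> (norm (x - z))\<^sup>2 - 2 * t * (f x - f z) + 2 * t * \<epsilon>
           + (1 + 2 * gb) / (1 - 2 * lb) * (t * norm s)\<^sup>2"
proof -
  have "(norm (x' - z))\<^sup>2 \<le> (norm ((x - t *\<^sub>R s) - z))\<^sup>2
          + ((1 + 2 * g) / (1 - 2 * l) - 1) * (norm ((x - t *\<^sub>R s) - x))\<^sup>2"
    using l by (intro inexact_proj_dist_le[OF tol x' x z g(1) l(1) _ th]) auto
  also have "norm ((x - t *\<^sub>R s) - x) = t * norm s"
    using t by simp
  also have "((1 + 2 * g) / (1 - 2 * l) - 1) * (t * norm s)\<^sup>2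
      \<le> ((1 + 2 * gb) / (1 - 2 * lb) - 1) * (t * norm s)\<^sup>2"
    using inexact_proj_const_mono[OF g l] by (intro mult_right_mono) auto
  also have "(norm ((x - t *\<^sub>R s) - z))\<^sup>2
      = (norm (x - z))\<^sup>2 - 2 * t * inner (x - z) s + (t * norm s)\<^sup>2"
    using dot_norm_neg[of "x - z" "t *\<^sub>R s"] t
    by (simp add: algebra_simps power_mult_distrib)
  finally have proj: "(norm (x' - z))\<^sup>2 \<le> (norm (x - z))\<^sup>2 - 2 * t * inner (x - z) s
      + (1 + 2 * gb) / (1 - 2 * lb) * (t * norm s)\<^sup>2"
    by (simp add: algebra_simps)
  have "f z \<ge> f x + inner s (z - x) - \<epsilon>"
    using s by (simp add: eps_subdiff_def)
  then have "f x - f z - \<epsilon> \<le> inner (x - z) s"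
    by (simp add: inner_diff inner_commute)
  then have "t * (f x - f z - \<epsilon>) \<le> t * inner (x - z) s"
    using t by (rule mult_left_mono)
  with proj show ?thesis
    by (simp add: algebra_simps)
qed
lemma exogenous_step_bound:
  fixes a n c t e G \<nu> \<mu> D D' :: real
  assumes descent: "D' \<le> D - 2 * t * G + 2 * t * e + \<nu> * (t * n)\<^sup>2"
    and t: "t = a / max 1 n" and n: "0 \<le> n" "n \<le> c"
    and a: "0 \<le> a" and G: "0 \<le> G" and e: "0 \<le> e" "e \<le> \<mu> * a" and \<nu>: "0 \<le> \<nu>"
  shows "2 * a * G / max 1 c \<le> D - D' + (\<nu> + 2 * \<mu>) * a\<^sup>2"
proof -
  have t0: "0 \<le> t" and ta: "t \<le> a" and tn: "t * n \<le> a"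
    using a n mult_left_mono[of 1 "max 1 n" a] mult_left_mono[of n "max 1 n" a]
    by (auto simp: t field_simps)
  have "2 * a * G / max 1 c \<le> 2 * a * G / max 1 n"
    using a G n by (intro divide_left_mono) auto
  also have "\<dots> = 2 * t * G"
    by (simp add: t)
  finally have "2 * a * G / max 1 c \<le> 2 * t * G" .
  moreover have "t * e \<le> \<mu> * a\<^sup>2"
    using mult_mono[OF ta e(2) a e(1)] by (simp add: power2_eq_square algebra_simps)
  moreover have "\<nu> * (t * n)\<^sup>2 \<le> \<nu> * a\<^sup>2"
    using t0 n(1) tn \<nu> by (intro mult_left_mono power_mono) auto
  ultimately show ?thesis
    using descent by (simp add: algebra_simps)
qed

lemma Min_le_of_weighted_descent:
  fixes a G D :: "nat \<Rightarrow> real"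
  assumes descent: "\<And>k. 2 * a k * G k / \<Gamma> \<le> D k - D (Suc k) + \<rho> * (a k)\<^sup>2"
    and D: "\<And>k. 0 \<le> D k" and a: "\<And>k. 0 \<le> a k"
    and \<Gamma>: "0 < \<Gamma>" and S: "0 < (\<Sum>k=0..N. a k)"
  shows "Min (G ` {0..N}) \<le> \<Gamma> * (D 0 + \<rho> * (\<Sum>k=0..N. (a k)\<^sup>2)) / (2 * (\<Sum>k=0..N. a k))"
proof -
  define m where "m = Min (G ` {0..N})"
  have "m * (\<Sum>k=0..N. a k) \<le> (\<Sum>k=0..N. a k * G k)"
    unfolding sum_distrib_left
  proof (intro sum_mono)
    fix k assume "k \<in> {0..N}"
    then have "m \<le> G k" by (simp add: m_def)
    then show "m * a k \<le> a k * G k"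
      using mult_right_mono[OF _ a[of k]] by (simp add: mult.commute)
  qed
  also have "2 * \<dots> / \<Gamma> = (\<Sum>k=0..N. 2 * a k * G k / \<Gamma>)"
    by (simp add: sum_divide_distrib sum_distrib_left mult.assoc)
  also have "\<dots> \<le> (\<Sum>k=0..N. D k - D (Suc k) + \<rho> * (a k)\<^sup>2)"
    by (intro sum_mono descent)
  also have "\<dots> = D 0 - D (Suc N) + \<rho> * (\<Sum>k=0..N. (a k)\<^sup>2)"
    by (simp add: sum.distrib sum_distrib_left sum_Suc_diff[of 0 N "\<lambda>k. - D k", simplified])
  finally have "2 * (m * (\<Sum>k=0..N. a k)) / \<Gamma> \<le> D 0 + \<rho> * (\<Sum>k=0..N. (a k)\<^sup>2)"
    using D[of "Suc N"] \<Gamma> by (smt (verit) divide_right_mono mult_left_mono)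
  then show ?thesis
    using \<Gamma> S by (simp add: m_def pos_divide_le_eq pos_le_divide_eq algebra_simps)
qed

theorem mainTheorem6:
  fixes f :: "'a::euclidean_space \<Rightarrow> real"
    and C :: "'a set"
    and x s :: "nat \<Rightarrow> 'a"
    and t \<alpha> \<epsilon> \<gamma> \<theta> lam :: "nat \<Rightarrow> real"
    and \<phi> :: "nat \<Rightarrow> 'a \<Rightarrow> 'a \<Rightarrow> 'a \<Rightarrow> real"
    and \<gamma>bar \<theta>bar lambar \<mu> :: real
    and xstar :: 'a
  assumes f_convex: "convex_on UNIV f"
    and C_closed: "closed C" and C_convex: "convex C" and C_nonempty: "C \<noteq> {}"
    \<comment> \<open>standing assumptions on the tolerance parameters\<close>
    and bars: "0 \<le> \<gamma>bar" "0 \<le> \<theta>bar" "\<theta>bar < 1/2" "0 \<le> lambar" "lambar < 1/2"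
    and params: "\<And>k. 0 \<le> \<gamma> k \<and> \<gamma> k < \<gamma>bar" "\<And>k. 0 \<le> \<theta> k \<and> \<theta> k < \<theta>bar"
                "\<And>k. 0 \<le> lam k \<and> lam k < lambar"
    and tol: "\<And>k. rel_err_tol (\<gamma> k) (\<theta> k) (lam k) (\<phi> k)"
    \<comment> \<open>Subgradient-InexP iteration (infinite sequence)\<close>
    and x0: "x 0 \<in> C"
    and nostop: "\<And>k. 0 \<notin> subdiff f (x k)"
    and s_sub: "\<And>k. s k \<in> eps_subdiff f (\<epsilon> k) (x k)"
    and s_nz: "\<And>k. s k \<noteq> 0"
    and t_pos: "\<And>k. t k > 0"
    and step: "\<And>k. x (Suc k) \<in> inexact_proj C (\<phi> k) (x k) (x k - t k *\<^sub>R s k)"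
    \<comment> \<open>exogenous stepsize rule\<close>
    and mu: "0 \<le> \<mu>"
    and alpha_nn: "\<And>k. 0 \<le> \<alpha> k" and eps_nn: "\<And>k. 0 \<le> \<epsilon> k"
    and eps_mono: "decseq \<epsilon>"
    and alpha_div: "\<not> summable \<alpha>"
    and alpha_sq: "summable (\<lambda>k. (\<alpha> k)\<^sup>2)"
    and eps_le: "\<And>k. \<epsilon> k \<le> \<mu> * \<alpha> k"
    and t_def: "\<And>k. t k = \<alpha> k / max 1 (norm (s k))"
    \<comment> \<open>convergence to a solution\<close>
    and conv: "x \<longlonglongrightarrow> xstar"
    and xstar_opt: "xstar \<in> opt_set f C"
  shows "\<exists>c>0. (\<forall>k. norm (s k) \<le> c) \<and>
           (\<forall>N. Min ((\<lambda>k. f (x k) - opt_val f C) ` {0..N})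
              \<le> max 1 c * ((norm (x 0 - xstar))\<^sup>2
                   + ((1 + 2 * \<gamma>bar) / (1 - 2 * lambar) + 2 * \<mu>) * (\<Sum>k=0..N. (\<alpha> k)\<^sup>2))
                / (2 * (\<Sum>k=0..N. \<alpha> k)))"
proof -
  have xC: "x k \<in> C" for k
    by (induction k) (use x0 step in \<open>auto simp: inexact_proj_def\<close>)
  have xstar: "xstar \<in> C" "\<And>y. y \<in> C \<Longrightarrow> f xstar \<le> f y"
    using xstar_opt by (auto simp: opt_set_def)
  then have fstar: "opt_val f C = f xstar"
    unfolding opt_val_def by (intro cInf_eq_minimum) auto
  obtain c where c: "c > 0" "\<And>k. norm (s k) \<le> c"
    using convex_eps_subgradients_bounded[OF f_convex convergent_imp_bounded[OF conv] s_sub,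
        of "\<epsilon> 0"] decseqD[OF eps_mono] by blast
  have \<alpha>_pos: "0 < \<alpha> k" for k
    using t_pos[of k] by (auto simp: t_def zero_less_divide_iff)
  define \<nu> where "\<nu> = (1 + 2 * \<gamma>bar) / (1 - 2 * lambar)"
  have descent: "2 * \<alpha> k * (f (x k) - opt_val f C) / max 1 c
      \<le> (norm (x k - xstar))\<^sup>2 - (norm (x (Suc k) - xstar))\<^sup>2 + (\<nu> + 2 * \<mu>) * (\<alpha> k)\<^sup>2" for k
  proof -
    have "(norm (x (Suc k) - xstar))\<^sup>2 \<le> (norm (x k - xstar))\<^sup>2 - 2 * t k * (f (x k) - f xstar)
        + 2 * t k * \<epsilon> k + \<nu> * (t k * norm (s k))\<^sup>2"
      unfolding \<nu>_def using params[of k] bars t_pos[of k]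
      by (intro eps_subgradient_inexact_proj_step[OF s_sub step tol xC xstar(1)]) auto
    then show ?thesis
      unfolding fstar
      by (rule exogenous_step_bound[OF _ t_def norm_ge_zero c(2) alpha_nn _ eps_nn eps_le])
         (use xstar(2)[OF xC[of k]] bars in \<open>auto simp: \<nu>_def\<close>)
  qed
  have "0 < (\<Sum>k=0..N. \<alpha> k)" for N
    using \<alpha>_pos by (intro sum_pos) auto
  then show ?thesis
    using c Min_le_of_weighted_descent[where G = "\<lambda>k. f (x k) - opt_val f C"
        and D = "\<lambda>k. (norm (x k - xstar))\<^sup>2", OF descent _ alpha_nn]
    by (auto simp: \<nu>_def)
qed

end
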